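(* Let $\mathcal{A}$ be a unital associative algebra over a field $F$ with $\operatorname{char}(F)\neq 2$. Then (a) $\operatorname{GJDer}(\mathcal{A})=\operatorname{QJCent}(\mathcal{A})+\operatorname{QJDer}(\mathcal{A})$, and (b) $\operatorname{JCent}(\mathcal{A})=\operatorname{QJCent}(\mathcal{A})\cap\operatorname{QJDer}(\mathcal{A})$.
   Context: For $x,y\in\mathcal{A}$ let $x\circ y=xy+yx$. All maps below are $F$-linear maps $\mathcal{A}\to\mathcal{A}$. $\operatorname{GJDer}(\mathcal{A})$ (generalized Jordan derivations) is the set of linear $f$ for which there exist linear $g,h$ with $f(x)\circ y+x\circ g(y)=h(x\circ y)$ for all $x,y\in\mathcal{A}$. $\operatorname{QJCent}(\mathcal{A})$ (quasi Jordan centralizers) is the set of linear $f$ with $f(x)\circ y=x\circ f(y)$ for all $x,y$. $\operatorname{QJDer}(\mathcal{A})$ (quasi Jordan derivations) is the set of linear $f$ for which there exists a linear $h$ with $f(x)\circ y+x\circ f(y)=h(x\circ y)$ for all $x,y$. $\operatorname{JCent}(\mathcal{A})$ (Jordan centralizers) is the set of linear $f$ with $f(x\circ y)=f(x)\circ y$ for all $x,y$. The sum of two sets of maps means the set of all pointwise sums. *)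

theory Defs
  imports Main "HOL.Vector_Spaces"
begin

definition assoc_algebra :: "('a::field \<Rightarrow> 'b::ring_1 \<Rightarrow> 'b) \<Rightarrow> bool" where
  "assoc_algebra scale \<longleftrightarrow> Vector_Spaces.vector_space scale \<and>
     (\<forall>c x y. scale c (x * y) = scale c x * y \<and> scale c (x * y) = x * scale c y)"

definition jprod :: "'b::ring \<Rightarrow> 'b \<Rightarrow> 'b" where
  "jprod x y = x * y + y * x"

definition GJDer :: "('a::field \<Rightarrow> 'b::ring_1 \<Rightarrow> 'b) \<Rightarrow> ('b \<Rightarrow> 'b) set" where
  "GJDer scale = {f. Vector_Spaces.linear scale scale f \<and>
     (\<exists>g h. Vector_Spaces.linear scale scale g \<and> Vector_Spaces.linear scale scale h \<and>
        (\<forall>x y. jprod (f x) y + jprod x (g y) = h (jprod x y)))}"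

definition QJCent :: "('a::field \<Rightarrow> 'b::ring_1 \<Rightarrow> 'b) \<Rightarrow> ('b \<Rightarrow> 'b) set" where
  "QJCent scale = {f. Vector_Spaces.linear scale scale f \<and>
     (\<forall>x y. jprod (f x) y = jprod x (f y))}"

definition QJDer :: "('a::field \<Rightarrow> 'b::ring_1 \<Rightarrow> 'b) \<Rightarrow> ('b \<Rightarrow> 'b) set" where
  "QJDer scale = {f. Vector_Spaces.linear scale scale f \<and>
     (\<exists>h. Vector_Spaces.linear scale scale h \<and>
        (\<forall>x y. jprod (f x) y + jprod x (f y) = h (jprod x y)))}"

definition JCent :: "('a::field \<Rightarrow> 'b::ring_1 \<Rightarrow> 'b) \<Rightarrow> ('b \<Rightarrow> 'b) set" where
  "JCent scale = {f. Vector_Spaces.linear scale scale f \<and>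
     (\<forall>x y. f (jprod x y) = jprod (f x) y)}"

definition map_set_sum :: "('b \<Rightarrow> 'b::plus) set \<Rightarrow> ('b \<Rightarrow> 'b) set \<Rightarrow> ('b \<Rightarrow> 'b) set" where
  "map_set_sum S T = {(\<lambda>x. f x + g x) | f g. f \<in> S \<and> g \<in> T}"

end

theory Submission
  imports Defs
begin

text \<open>Since \<open>h (x \<circ> y)\<close> is symmetric in \<open>x\<close> and \<open>y\<close>, a generalized Jordan derivation
  \<open>f\<close> with companion \<open>g\<close> satisfies \<open>f x \<circ> y + x \<circ> g y = g x \<circ> y + x \<circ> f y\<close>. Hence
  \<open>(f - g)/2\<close> is a quasi Jordan centralizer and \<open>(f + g)/2\<close> a quasi Jordan derivation
  (with the same \<open>h\<close>); conversely \<open>c + d\<close> is a generalized Jordan derivation with companion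
  \<open>d - c\<close>. For a map \<open>f\<close> that is both a quasi Jordan centralizer and a quasi Jordan
  derivation, \<open>2 (f x \<circ> y) = h (x \<circ> y)\<close>; putting \<open>y = 1\<close> gives \<open>h = 2 f\<close>, so \<open>f\<close> is a
  Jordan centralizer.\<close>

lemma jprod_commute: "jprod x y = jprod y x"
  unfolding jprod_def by (simp add: add.commute)

lemma jprod_add_left: "jprod (x + y) z = jprod x z + jprod y z"
  and jprod_add_right: "jprod z (x + y) = jprod z x + jprod z y"
  and jprod_diff_left: "jprod (x - y) z = jprod x z - jprod y z"
  and jprod_diff_right: "jprod z (x - y) = jprod z x - jprod z y"
  unfolding jprod_def by (simp_all add: algebra_simps)

lemma jprod_one_left: "jprod 1 (x::'a::ring_1) = x + x"
  and jprod_one_right: "jprod x 1 = x + x"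
  unfolding jprod_def by simp_all

lemma jprod_swap_companion:
  assumes "\<And>x y. jprod (f x) y + jprod x (g y) = h (jprod x y)"
  shows "jprod (f x) y + jprod x (g y) = jprod (g x) y + jprod x (f y)"
proof -
  have "jprod (g x) y + jprod x (f y) = jprod (f y) x + jprod y (g x)"
    by (simp add: jprod_commute add.commute)
  also have "\<dots> = h (jprod x y)"
    using assms[of y x] by (simp add: jprod_commute)
  finally show ?thesis
    using assms[of x y] by simp
qed

locale unital_assoc_algebra = vector_space scale
  for scale :: "'a::field \<Rightarrow> 'b::ring_1 \<Rightarrow> 'b" (infixr \<open>*s\<close> 75) +
  assumes scale_mult_left: "c *s (x * y) = (c *s x) * y"
    and scale_mult_right: "c *s (x * y) = x * (c *s y)"
begin

sublocale vector_space_pair scale scale ..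

lemma jprod_scale_left: "jprod (c *s x) y = c *s jprod x y"
  and jprod_scale_right: "jprod x (c *s y) = c *s jprod x y"
  unfolding jprod_def
  by (simp_all add: scale_right_distrib flip: scale_mult_left scale_mult_right)

lemma QJCent_plus_QJDer_subset_GJDer:
  "map_set_sum (QJCent scale) (QJDer scale) \<subseteq> GJDer scale"
proof
  fix f assume "f \<in> map_set_sum (QJCent scale) (QJDer scale)"
  then obtain c d h where f: "f = (\<lambda>x. c x + d x)"
    and c: "Vector_Spaces.linear scale scale c" "\<And>x y. jprod (c x) y = jprod x (c y)"
    and d: "Vector_Spaces.linear scale scale d"
      "\<And>x y. jprod (d x) y + jprod x (d y) = h (jprod x y)"
    and h: "Vector_Spaces.linear scale scale h"
    unfolding map_set_sum_def QJCent_def QJDer_def by blast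
  have "jprod (c x + d x) y + jprod x (d y - c y) = h (jprod x y)" for x y
    using c(2)[of x y] d(2)[of x y] by (simp add: jprod_add_left jprod_diff_right algebra_simps)
  with c(1) d(1) h show "f \<in> GJDer scale"
    unfolding GJDer_def f by (blast intro: linear_compose_add linear_compose_sub)
qed

lemma JCent_subset_QJCent_Int_QJDer: "JCent scale \<subseteq> QJCent scale \<inter> QJDer scale"
proof
  fix f assume "f \<in> JCent scale"
  then have f: "Vector_Spaces.linear scale scale f"
    and J: "\<And>x y. f (jprod x y) = jprod (f x) y"
    unfolding JCent_def by auto
  have C: "jprod (f x) y = jprod x (f y)" for x y
    by (metis J jprod_commute)
  have "jprod (f x) y + jprod x (f y) = f (jprod x y) + f (jprod x y)" for x y
    by (simp add: C J)
  with f C show "f \<in> QJCent scale \<inter> QJDer scale"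
    unfolding QJCent_def QJDer_def by (blast intro: linear_compose_add)
qed

end

lemma assoc_algebra_imp_unital_assoc_algebra:
  "assoc_algebra scale \<Longrightarrow> unital_assoc_algebra scale"
  unfolding assoc_algebra_def unital_assoc_algebra_def unital_assoc_algebra_axioms_def by blast

locale unital_assoc_algebra_char_not_2 = unital_assoc_algebra +
  assumes two_neq_zero: "(2::'a) \<noteq> 0"
begin

lemma scale_half_double: "(1/2) *s (x + x) = x"
proof -
  have "(1/2) *s (x + x) = (1/2 + 1/2) *s x"
    by (simp only: scale_left_distrib scale_right_distrib)
  also have "1/2 + 1/2 = (1::'a)"
    using two_neq_zero by (simp flip: add_divide_distrib)
  finally show ?thesis by simp
qed

lemma double_cancel: "x + x = y + (y::'b) \<Longrightarrow> x = y"
  by (metis scale_half_double)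

lemma GJDer_subset_QJCent_plus_QJDer:
  "GJDer scale \<subseteq> map_set_sum (QJCent scale) (QJDer scale)"
proof
  fix f assume "f \<in> GJDer scale"
  then obtain g h where f: "Vector_Spaces.linear scale scale f"
    and g: "Vector_Spaces.linear scale scale g" and h: "Vector_Spaces.linear scale scale h"
    and E: "\<And>x y. jprod (f x) y + jprod x (g y) = h (jprod x y)"
    unfolding GJDer_def by blast
  note swap = jprod_swap_companion[of f g h, OF E]
  define c where "c = (\<lambda>x. (1/2) *s (f x - g x))"
  define d where "d = (\<lambda>x. (1/2) *s (f x + g x))"
  have "Vector_Spaces.linear scale scale c" "Vector_Spaces.linear scale scale d"
    unfolding c_def d_def using f g
    by (auto intro!: linear_compose_scale_right linear_compose_sub linear_compose_add)
  moreover have "jprod (c x) y = jprod x (c y)" for x y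
  proof -
    have "jprod (f x - g x) y = jprod x (f y - g y)"
      using swap[of x y] by (simp add: jprod_diff_left jprod_diff_right algebra_simps)
    then show ?thesis
      unfolding c_def by (simp add: jprod_scale_left jprod_scale_right)
  qed
  moreover have "jprod (d x) y + jprod x (d y) = h (jprod x y)" for x y
  proof -
    have "jprod (f x + g x) y + jprod x (f y + g y)
        = (jprod (f x) y + jprod x (g y)) + (jprod (g x) y + jprod x (f y))"
      by (simp add: jprod_add_left jprod_add_right ac_simps)
    also have "\<dots> = h (jprod x y) + h (jprod x y)"
      by (simp flip: swap E)
    finally show ?thesis
      unfolding d_def by (simp add: jprod_scale_left jprod_scale_right scale_half_double
          flip: scale_right_distrib)
  qed
  ultimately have "c \<in> QJCent scale" "d \<in> QJDer scale"
    unfolding QJCent_def QJDer_def using h by blast+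
  moreover have "f = (\<lambda>x. c x + d x)"
    by (simp add: c_def d_def scale_half_double flip: scale_right_distrib)
  ultimately show "f \<in> map_set_sum (QJCent scale) (QJDer scale)"
    unfolding map_set_sum_def by blast
qed

lemma QJCent_Int_QJDer_subset_JCent: "QJCent scale \<inter> QJDer scale \<subseteq> JCent scale"
proof
  fix f assume "f \<in> QJCent scale \<inter> QJDer scale"
  then obtain h where f: "Vector_Spaces.linear scale scale f"
    and C: "\<And>x y. jprod (f x) y = jprod x (f y)"
    and h: "Vector_Spaces.linear scale scale h"
    and D: "\<And>x y. jprod (f x) y + jprod x (f y) = h (jprod x y)"
    unfolding QJCent_def QJDer_def by blast
  have h_double: "h x = f x + f x" for x
  proof (rule double_cancel)
    have "h (x + x) = (f x + f x) + (f x + f x)"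
      using D[of x 1] C[of x 1] by (simp add: jprod_one_left jprod_one_right)
    then show "h x + h x = (f x + f x) + (f x + f x)"
      by (simp add: linear_add[OF h])
  qed
  have "f (jprod x y) = jprod (f x) y" for x y
  proof (rule double_cancel)
    show "f (jprod x y) + f (jprod x y) = jprod (f x) y + jprod (f x) y"
      using D[of x y] C[of x y] h_double[of "jprod x y"] by simp
  qed
  with f show "f \<in> JCent scale"
    unfolding JCent_def by blast
qed

end

theorem theorem2p1:
  fixes scale :: "'a::field \<Rightarrow> 'b::ring_1 \<Rightarrow> 'b"
  assumes "assoc_algebra scale"
    and "(2::'a) \<noteq> 0"
  shows "GJDer scale = map_set_sum (QJCent scale) (QJDer scale) \<and>
         JCent scale = QJCent scale \<inter> QJDer scale"
proof -
  interpret unital_assoc_algebra_char_not_2 scale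
    using assms by (simp add: unital_assoc_algebra_char_not_2_def
        unital_assoc_algebra_char_not_2_axioms_def assoc_algebra_imp_unital_assoc_algebra)
  show ?thesis
    using GJDer_subset_QJCent_plus_QJDer QJCent_plus_QJDer_subset_GJDer
      JCent_subset_QJCent_Int_QJDer QJCent_Int_QJDer_subset_JCent by blast
qed

end
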